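(* Let $G$ be a graph, $k\ge1$, and suppose $M_k(G)$ is a connected matroid. Then a set $B\subseteq E(G)$ is a base of $M_k(G)$ if and only if $\Delta G\langle B\rangle=k-1$, $V(G\langle B\rangle)=V(G)$, and $G\langle B\rangle$ has no tree component (i.e. $\Delta A\ge0$ for every component $A$ of $G\langle B\rangle$).
   Context: Graphs are finite, may have loops and parallel edges, and have no isolated vertices. $\Delta H=|E(H)|-|V(H)|$. For $X\subseteq E(G)$, $G\langle X\rangle$ is the subgraph with edge set $X$ and vertex set the vertices incident to $X$. For $k\ge0$, $M_k(G)$ is the matroid on $E(G)$ whose circuits are the inclusion-minimal members of $\{C\subseteq E(G):C\neq\emptyset,\ |C|=|V(G\langle C\rangle)|+k\}$. A matroid is connected if its ground set has at least two elements and every two elements lie in a common circuit. *)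

theory Defs
  imports Main
begin

text \<open>A graph (loops and parallel edges allowed, no isolated vertices) is given by a
finite edge set E and an incidence map ends: each edge has one end (loop) or two ends.
The vertex set is the set of vertices incident to edges.\<close>

definition graph :: "'e set \<Rightarrow> ('e \<Rightarrow> 'v set) \<Rightarrow> bool" where
  "graph E ends \<longleftrightarrow> finite E \<and> (\<forall>e\<in>E. 1 \<le> card (ends e) \<and> card (ends e) \<le> 2)"

definition verts :: "('e \<Rightarrow> 'v set) \<Rightarrow> 'e set \<Rightarrow> 'v set" where
  "verts ends X = (\<Union>e\<in>X. ends e)"

definition delta :: "('e \<Rightarrow> 'v set) \<Rightarrow> 'e set \<Rightarrow> int" where
  "delta ends X = int (card X) - int (card (verts ends X))"

definition circ_cand :: "('e \<Rightarrow> 'v set) \<Rightarrow> 'e set \<Rightarrow> nat \<Rightarrow> 'e set \<Rightarrow> bool" where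
  "circ_cand ends E k C \<longleftrightarrow> C \<subseteq> E \<and> C \<noteq> {} \<and> card C = card (verts ends C) + k"

definition Mk_circuit :: "('e \<Rightarrow> 'v set) \<Rightarrow> 'e set \<Rightarrow> nat \<Rightarrow> 'e set \<Rightarrow> bool" where
  "Mk_circuit ends E k C \<longleftrightarrow> circ_cand ends E k C \<and>
     (\<forall>D. D \<subseteq> C \<and> circ_cand ends E k D \<longrightarrow> D = C)"

definition Mk_indep :: "('e \<Rightarrow> 'v set) \<Rightarrow> 'e set \<Rightarrow> nat \<Rightarrow> 'e set \<Rightarrow> bool" where
  "Mk_indep ends E k I \<longleftrightarrow> I \<subseteq> E \<and> \<not> (\<exists>C. Mk_circuit ends E k C \<and> C \<subseteq> I)"

definition Mk_base :: "('e \<Rightarrow> 'v set) \<Rightarrow> 'e set \<Rightarrow> nat \<Rightarrow> 'e set \<Rightarrow> bool" where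
  "Mk_base ends E k B \<longleftrightarrow> Mk_indep ends E k B \<and>
     (\<forall>I. Mk_indep ends E k I \<and> B \<subseteq> I \<longrightarrow> I = B)"

definition Mk_connected :: "('e \<Rightarrow> 'v set) \<Rightarrow> 'e set \<Rightarrow> nat \<Rightarrow> bool" where
  "Mk_connected ends E k \<longleftrightarrow> 2 \<le> card E \<and>
     (\<forall>e\<in>E. \<forall>f\<in>E. \<exists>C. Mk_circuit ends E k C \<and> e \<in> C \<and> f \<in> C)"

text \<open>Components of G<X>: since G<X> has no isolated vertices, each component is G<Y>
for Y an equivalence class of edges of X under "connected by a chain of edges of X,
consecutive ones sharing an end".\<close>
definition edge_adj :: "('e \<Rightarrow> 'v set) \<Rightarrow> 'e set \<Rightarrow> 'e \<Rightarrow> 'e \<Rightarrow> bool" where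
  "edge_adj ends X e f \<longleftrightarrow> e \<in> X \<and> f \<in> X \<and> ends e \<inter> ends f \<noteq> {}"

definition comp_edge_sets :: "('e \<Rightarrow> 'v set) \<Rightarrow> 'e set \<Rightarrow> 'e set set" where
  "comp_edge_sets ends X = {{f. (edge_adj ends X)\<^sup>*\<^sup>* e f} | e. e \<in> X}"

end

theory Submission
  imports Defs
begin

text \<open>The function \<open>delta\<close> is supermodular, and \<open>I\<close> is independent in \<open>M\<^sub>k(G)\<close> exactly when
every nonempty \<open>C \<subseteq> I\<close> has \<open>\<Delta>C \<le> k - 1\<close>. Call a nonempty subset of a base \<open>B\<close> tight if
\<open>\<Delta> = k - 1\<close>. By supermodularity tight sets are closed under union, so there is a largest one,
\<open>U\<close>, and every edge outside \<open>B\<close> has both ends in \<open>V(G\<langle>U\<rangle>)\<close>. If some edge \<open>f \<in> B\<close> were not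
in \<open>U\<close>, a circuit through \<open>f\<close> (which exists by connectivity) would allow enlarging \<open>U\<close> to a
subset of \<open>B\<close> with \<open>\<Delta> \<ge> k\<close>. Hence \<open>B = U\<close>; \<open>B\<close> spans, and since components are vertex-disjoint,
a component with \<open>\<Delta> < 0\<close> would leave a remainder of \<open>B\<close> with \<open>\<Delta> \<ge> k\<close>.
Conversely, if all components have \<open>\<Delta> \<ge> 0\<close>, then \<open>\<Delta>\<close> attains its maximum over subsets of \<open>B\<close>
at \<open>B\<close> itself, so \<open>B\<close> is independent, and as \<open>B\<close> spans, adding any edge raises \<open>\<Delta>\<close> to \<open>k\<close>.\<close>

lemma graph_ends:
  assumes "graph E ends" "e \<in> E"
  shows "finite (ends e)" "ends e \<noteq> {}" "card (ends e) \<le> 2"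
proof -
  have "1 \<le> card (ends e)" "card (ends e) \<le> 2" using assms unfolding graph_def by auto
  then show "finite (ends e)" "ends e \<noteq> {}" "card (ends e) \<le> 2"
    by (auto intro: card_ge_0_finite)
qed

lemma graph_finite_edges: "graph E ends \<Longrightarrow> X \<subseteq> E \<Longrightarrow> finite X"
  unfolding graph_def using finite_subset by blast

lemma finite_verts: "graph E ends \<Longrightarrow> X \<subseteq> E \<Longrightarrow> finite (verts ends X)"
  unfolding verts_def using graph_finite_edges graph_ends(1) by (metis finite_UN_I subsetD)

lemma verts_Un: "verts ends (X \<union> Y) = verts ends X \<union> verts ends Y"
  by (auto simp: verts_def)

lemma verts_mono: "X \<subseteq> Y \<Longrightarrow> verts ends X \<subseteq> verts ends Y"
  by (auto simp: verts_def)

lemma delta_empty [simp]: "delta ends {} = 0"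
  by (simp add: delta_def verts_def)

subsection \<open>The function delta\<close>

lemma delta_Un_disjoint:
  assumes g: "graph E ends" and "X \<subseteq> E" "R \<subseteq> E" "X \<inter> R = {}"
  shows "delta ends (X \<union> R) =
           delta ends X + int (card R) - int (card (verts ends R - verts ends X))"
proof -
  have fin: "finite X" "finite R" "finite (verts ends X)" "finite (verts ends R)"
    using assms graph_finite_edges finite_verts by metis+
  have "card (X \<union> R) = card X + card R"
    using fin assms(4) by (simp add: card_Un_disjoint)
  moreover have "verts ends (X \<union> R) = verts ends X \<union> (verts ends R - verts ends X)"
    by (auto simp: verts_def)
  moreover have "card (verts ends X \<union> (verts ends R - verts ends X))
                   = card (verts ends X) + card (verts ends R - verts ends X)"
    using fin by (intro card_Un_disjoint) auto
  ultimately show ?thesis unfolding delta_def by simp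
qed

lemma delta_insert:
  assumes g: "graph E ends" and "X \<subseteq> E" "e \<in> E" "e \<notin> X"
  shows "delta ends (insert e X) = delta ends X + 1 - int (card (ends e - verts ends X))"
  using delta_Un_disjoint[OF g \<open>X \<subseteq> E\<close>, of "{e}"] assms(3,4) by (simp add: verts_def)

lemma delta_singleton_nonpos:
  assumes g: "graph E ends" and e: "e \<in> E"
  shows "delta ends {e} \<le> 0"
  using delta_insert[OF g empty_subsetI e] graph_ends[OF g e]
  by (simp add: verts_def Suc_le_eq card_gt_0_iff)

lemma delta_Diff_singleton_ge:
  assumes g: "graph E ends" and "X \<subseteq> E" "e \<in> X"
  shows "delta ends X - 1 \<le> delta ends (X - {e})"
proof -
  have "delta ends (insert e (X - {e})) =
          delta ends (X - {e}) + 1 - int (card (ends e - verts ends (X - {e})))"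
    by (rule delta_insert[OF g]) (use assms in auto)
  then show ?thesis using \<open>e \<in> X\<close> by (simp add: insert_absorb)
qed

lemma delta_insert_adjacent:
  assumes g: "graph E ends" and "X \<subseteq> E" "e \<in> E" "e \<notin> X"
    and "ends e \<inter> verts ends X \<noteq> {}"
  shows "delta ends X \<le> delta ends (insert e X)"
proof -
  have "ends e - verts ends X \<subset> ends e" using assms(5) by blast
  then have "card (ends e - verts ends X) < card (ends e)"
    using graph_ends(1)[OF g \<open>e \<in> E\<close>] by (rule psubset_card_mono[rotated])
  then show ?thesis using delta_insert[OF assms(1-4)] graph_ends(3)[OF g \<open>e \<in> E\<close>] by linarith
qed

lemma delta_insert_covered:
  assumes g: "graph E ends" and "X \<subseteq> E" "e \<in> E" "e \<notin> X"
    and "ends e \<subseteq> verts ends X"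
  shows "delta ends (insert e X) = delta ends X + 1"
proof -
  have "ends e - verts ends X = {}" using assms(5) by blast
  then show ?thesis using delta_insert[OF assms(1-4)] by (simp only: card.empty)
qed

lemma delta_Un_separated:
  assumes g: "graph E ends" and "X \<subseteq> E" "R \<subseteq> E" "X \<inter> R = {}"
    and "verts ends X \<inter> verts ends R = {}"
  shows "delta ends (X \<union> R) = delta ends X + delta ends R"
proof -
  have "verts ends R - verts ends X = verts ends R" using assms(5) by blast
  then show ?thesis using delta_Un_disjoint[OF assms(1-4)] unfolding delta_def by simp
qed

lemma delta_gain_mono:
  assumes g: "graph E ends" and "X \<subseteq> E" "Y \<subseteq> E" "R \<subseteq> E"
    and "X \<inter> R = {}" "Y \<inter> R = {}" "verts ends X \<subseteq> verts ends Y"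
  shows "delta ends (X \<union> R) - delta ends X \<le> delta ends (Y \<union> R) - delta ends Y"
proof -
  have "card (verts ends R - verts ends Y) \<le> card (verts ends R - verts ends X)"
    using assms(7) finite_verts[OF g \<open>R \<subseteq> E\<close>] by (intro card_mono) auto
  then show ?thesis
    using delta_Un_disjoint[OF g \<open>X \<subseteq> E\<close> \<open>R \<subseteq> E\<close>] delta_Un_disjoint[OF g \<open>Y \<subseteq> E\<close> \<open>R \<subseteq> E\<close>]
      assms(5,6) by simp
qed

lemma delta_supermodular:
  assumes g: "graph E ends" and "X \<subseteq> E" "Y \<subseteq> E"
  shows "delta ends X + delta ends Y \<le> delta ends (X \<union> Y) + delta ends (X \<inter> Y)"
proof -
  have fin: "finite X" "finite Y" "finite (verts ends X)" "finite (verts ends Y)"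
    using assms graph_finite_edges finite_verts by metis+
  have "card (verts ends (X \<inter> Y)) \<le> card (verts ends X \<inter> verts ends Y)"
    using fin by (intro card_mono) (auto simp: verts_def)
  then show ?thesis
    using card_Un_Int[of X Y] card_Un_Int[of "verts ends X" "verts ends Y"] fin
    unfolding delta_def verts_Un by linarith
qed

subsection \<open>Independent sets and circuits of \<open>M\<^sub>k(G)\<close>\<close>

lemma circ_cand_iff_delta:
  "circ_cand ends E k C \<longleftrightarrow> C \<subseteq> E \<and> C \<noteq> {} \<and> delta ends C = int k"
  unfolding circ_cand_def delta_def by auto

lemma exists_subset_delta_eq:
  assumes g: "graph E ends" and k: "1 \<le> k"
    and "X \<subseteq> E" "X \<noteq> {}" "int k \<le> delta ends X"
  shows "\<exists>C\<subseteq>X. C \<noteq> {} \<and> delta ends C = int k"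
proof -
  define A where "A = {C. C \<subseteq> X \<and> C \<noteq> {} \<and> int k \<le> delta ends C}"
  have "A \<subseteq> Pow X" unfolding A_def by blast
  then have "finite A" using graph_finite_edges[OF g \<open>X \<subseteq> E\<close>] by (meson finite_Pow_iff finite_subset)
  moreover have "X \<in> A" using assms unfolding A_def by blast
  ultimately obtain C where C: "C \<in> A" and min: "\<forall>D\<in>A. D \<le> C \<longrightarrow> C = D"
    by (meson finite_has_minimal2)
  have CX: "C \<subseteq> X" "C \<noteq> {}" "int k \<le> delta ends C" using C unfolding A_def by auto
  have CE: "C \<subseteq> E" using CX \<open>X \<subseteq> E\<close> by blast
  have "delta ends C = int k"
  proof (rule ccontr)
    assume "delta ends C \<noteq> int k"
    with CX have gt: "int k < delta ends C" by simp
    obtain e where e: "e \<in> C" using CX by blast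
    have "C \<noteq> {e}"
    proof
      assume "C = {e}"
      then have "delta ends C \<le> 0" using delta_singleton_nonpos[OF g] e CE by blast
      then show False using gt k by linarith
    qed
    then have "C - {e} \<noteq> {}" using e by blast
    moreover have "int k \<le> delta ends (C - {e})"
      using gt delta_Diff_singleton_ge[OF g CE e] by linarith
    ultimately have "C - {e} \<in> A" using CX unfolding A_def by blast
    then show False using min e by blast
  qed
  then show ?thesis using CX by blast
qed

lemma circ_cand_contains_Mk_circuit:
  assumes g: "graph E ends" and "circ_cand ends E k C"
  shows "\<exists>D\<subseteq>C. Mk_circuit ends E k D"
proof -
  define A where "A = {D. D \<subseteq> C \<and> circ_cand ends E k D}"
  have "finite C" using assms graph_finite_edges unfolding circ_cand_def by blast
  then have "finite A" unfolding A_def by simp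
  moreover have "C \<in> A" using assms unfolding A_def by blast
  ultimately obtain D where D: "D \<in> A" and min: "\<forall>D'\<in>A. D' \<le> D \<longrightarrow> D = D'"
    by (meson finite_has_minimal2)
  have DC: "D \<subseteq> C" "circ_cand ends E k D" using D unfolding A_def by auto
  have "Mk_circuit ends E k D" unfolding Mk_circuit_def
  proof (intro conjI allI impI)
    fix D' assume "D' \<subseteq> D \<and> circ_cand ends E k D'"
    then have "D' \<in> A" using DC unfolding A_def by blast
    then show "D' = D" using min \<open>D' \<subseteq> D \<and> circ_cand ends E k D'\<close> by blast
  qed (rule DC(2))
  then show ?thesis using DC by blast
qed

lemma Mk_circuit_delta:
  "Mk_circuit ends E k C \<Longrightarrow> C \<subseteq> E \<and> C \<noteq> {} \<and> delta ends C = int k"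
  unfolding Mk_circuit_def circ_cand_iff_delta by blast

lemma Mk_indep_iff:
  assumes g: "graph E ends" and k: "1 \<le> k"
  shows "Mk_indep ends E k I \<longleftrightarrow>
           I \<subseteq> E \<and> (\<forall>C\<subseteq>I. C \<noteq> {} \<longrightarrow> delta ends C \<le> int k - 1)"
proof
  assume I: "Mk_indep ends E k I"
  then have IE: "I \<subseteq> E" unfolding Mk_indep_def by blast
  have "delta ends C \<le> int k - 1" if "C \<subseteq> I" "C \<noteq> {}" for C
  proof (rule ccontr)
    assume "\<not> delta ends C \<le> int k - 1"
    then have "int k \<le> delta ends C" by linarith
    moreover have "C \<subseteq> E" using that IE by blast
    ultimately obtain C' where "C' \<subseteq> C" "C' \<noteq> {}" "delta ends C' = int k"
      using exists_subset_delta_eq[OF g k _ \<open>C \<noteq> {}\<close>] by blast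
    moreover have "C' \<subseteq> E" using \<open>C' \<subseteq> C\<close> \<open>C \<subseteq> E\<close> by blast
    ultimately have "circ_cand ends E k C'" unfolding circ_cand_iff_delta by blast
    then obtain D where "D \<subseteq> C'" "Mk_circuit ends E k D"
      using circ_cand_contains_Mk_circuit[OF g] by blast
    moreover have "D \<subseteq> I" using \<open>D \<subseteq> C'\<close> \<open>C' \<subseteq> C\<close> \<open>C \<subseteq> I\<close> by blast
    ultimately show False using I unfolding Mk_indep_def by blast
  qed
  then show "I \<subseteq> E \<and> (\<forall>C\<subseteq>I. C \<noteq> {} \<longrightarrow> delta ends C \<le> int k - 1)" using IE by blast
next
  assume I: "I \<subseteq> E \<and> (\<forall>C\<subseteq>I. C \<noteq> {} \<longrightarrow> delta ends C \<le> int k - 1)"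
  have "\<not> C \<subseteq> I" if "Mk_circuit ends E k C" for C
  proof
    assume "C \<subseteq> I"
    then have "delta ends C \<le> int k - 1" using I Mk_circuit_delta[OF that] by blast
    then show False using Mk_circuit_delta[OF that] by linarith
  qed
  then show "Mk_indep ends E k I" unfolding Mk_indep_def using I by blast
qed

lemma Mk_indepD:
  assumes g: "graph E ends" and k: "1 \<le> k" and I: "Mk_indep ends E k I"
  shows "I \<subseteq> E" "\<And>C. C \<subseteq> I \<Longrightarrow> C \<noteq> {} \<Longrightarrow> delta ends C \<le> int k - 1"
  using I unfolding Mk_indep_iff[OF g k] by blast+

lemma Mk_circuit_psubset_delta:
  assumes g: "graph E ends" and k: "1 \<le> k" and C: "Mk_circuit ends E k C" and "S \<subset> C"
  shows "delta ends S \<le> int k - 1"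
proof (rule ccontr)
  assume "\<not> delta ends S \<le> int k - 1"
  then have "int k \<le> delta ends S" "S \<noteq> {}" using k by auto
  moreover have "S \<subseteq> E" using C \<open>S \<subset> C\<close> Mk_circuit_delta by blast
  ultimately obtain D where "D \<subseteq> S" "D \<noteq> {}" "delta ends D = int k"
    using exists_subset_delta_eq[OF g k] by blast
  then have "circ_cand ends E k D" using \<open>S \<subseteq> E\<close> unfolding circ_cand_iff_delta by blast
  then show False using C \<open>D \<subseteq> S\<close> \<open>S \<subset> C\<close> unfolding Mk_circuit_def by blast
qed

subsection \<open>Tight subsets of an independent set\<close>

definition tight :: "('e \<Rightarrow> 'v set) \<Rightarrow> nat \<Rightarrow> 'e set \<Rightarrow> 'e set \<Rightarrow> bool" where
  "tight ends k B X \<longleftrightarrow> X \<subseteq> B \<and> X \<noteq> {} \<and> delta ends X = int k - 1"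

lemma tight_Un:
  assumes g: "graph E ends" and k: "1 \<le> k" and I: "Mk_indep ends E k B"
    and X: "tight ends k B X" and Y: "tight ends k B Y"
  shows "tight ends k B (X \<union> Y)"
proof -
  note bound = Mk_indepD(2)[OF g k I]
  have XB: "X \<subseteq> B" "X \<noteq> {}" and dX: "delta ends X = int k - 1"
    using X unfolding tight_def by auto
  have YB: "Y \<subseteq> B" and dY: "delta ends Y = int k - 1"
    using Y unfolding tight_def by auto
  have "delta ends (X \<inter> Y) \<le> int k - 1"
    using bound[of "X \<inter> Y"] XB(1) k by (cases "X \<inter> Y = {}") auto
  moreover have "delta ends (X \<union> Y) \<le> int k - 1" using bound[of "X \<union> Y"] XB YB by simp
  moreover have "delta ends X + delta ends Y \<le> delta ends (X \<union> Y) + delta ends (X \<inter> Y)"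
    using Mk_indepD(1)[OF g k I] XB YB by (intro delta_supermodular[OF g]) auto
  ultimately have "delta ends (X \<union> Y) = int k - 1" using dX dY by linarith
  then show ?thesis using XB YB unfolding tight_def by simp
qed

lemma tight_Union:
  assumes g: "graph E ends" and k: "1 \<le> k" and I: "Mk_indep ends E k B"
    and "finite T" "T \<noteq> {}" "\<forall>X\<in>T. tight ends k B X"
  shows "tight ends k B (\<Union>T)"
  using assms(4-6) by (induction T rule: finite_ne_induct) (auto intro: tight_Un[OF g k I])

lemma tight_Union_all:
  assumes g: "graph E ends" and k: "1 \<le> k" and I: "Mk_indep ends E k B"
    and "tight ends k B X"
  shows "tight ends k B (\<Union>{X. tight ends k B X})"
proof (rule tight_Union[OF g k I])
  have "{X. tight ends k B X} \<subseteq> Pow B" unfolding tight_def by blast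
  then show "finite {X. tight ends k B X}"
    using graph_finite_edges[OF g Mk_indepD(1)[OF g k I]] by (simp add: finite_subset)
  show "{X. tight ends k B X} \<noteq> {}" using \<open>tight ends k B X\<close> by blast
qed simp

text \<open>Maximality of the base is what makes \<open>\<Delta>\<close> drop back from \<open>k\<close> to \<open>k - 1\<close>
when the new edge is removed, and that forces the edge to add no new vertex.\<close>

lemma Mk_base_nonbase_edge_covered:
  assumes g: "graph E ends" and k: "1 \<le> k" and B: "Mk_base ends E k B"
    and e: "e \<in> E" "e \<notin> B"
  shows "\<exists>X. tight ends k B X \<and> ends e \<subseteq> verts ends X"
proof -
  have I: "Mk_indep ends E k B" using B unfolding Mk_base_def by blast
  note BE = Mk_indepD(1)[OF g k I] and bound = Mk_indepD(2)[OF g k I]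
  have "\<not> Mk_indep ends E k (insert e B)" using B e unfolding Mk_base_def by blast
  moreover have "insert e B \<subseteq> E" using BE e by blast
  ultimately obtain C where C: "C \<subseteq> insert e B" "C \<noteq> {}" "\<not> delta ends C \<le> int k - 1"
    using Mk_indep_iff[OF g k, of "insert e B"] by blast
  have "e \<in> C" using C bound by blast
  define X where "X = C - {e}"
  have XB: "X \<subseteq> B" and CX: "C = insert e X" and eX: "e \<notin> X"
    using C(1) \<open>e \<in> C\<close> unfolding X_def by auto
  have XE: "X \<subseteq> E" using XB BE by blast
  have dC: "delta ends C = delta ends X + 1 - int (card (ends e - verts ends X))"
    unfolding CX by (rule delta_insert[OF g XE e(1) eX])
  have "X \<noteq> {}"
  proof
    assume "X = {}"
    then have "delta ends C \<le> 0" using CX delta_singleton_nonpos[OF g e(1)] by simp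
    then show False using C(3) k by linarith
  qed
  then have "delta ends X \<le> int k - 1" using bound XB by blast
  then have "card (ends e - verts ends X) = 0" and dX: "delta ends X = int k - 1"
    using dC C(3) by linarith+
  then have "ends e \<subseteq> verts ends X" using graph_ends(1)[OF g e(1)] by simp
  moreover have "tight ends k B X" using XB \<open>X \<noteq> {}\<close> dX unfolding tight_def by simp
  ultimately show ?thesis by blast
qed

lemma Mk_base_verts:
  assumes g: "graph E ends" and k: "1 \<le> k" and B: "Mk_base ends E k B"
  shows "verts ends B = verts ends E"
proof
  have "B \<subseteq> E" using B unfolding Mk_base_def Mk_indep_def by blast
  then show "verts ends B \<subseteq> verts ends E" by (rule verts_mono)
next
  have "ends e \<subseteq> verts ends B" if e: "e \<in> E" for e
  proof (cases "e \<in> B")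
    case True
    then show ?thesis by (auto simp: verts_def)
  next
    case False
    then obtain X where "tight ends k B X" "ends e \<subseteq> verts ends X"
      using Mk_base_nonbase_edge_covered[OF g k B e] by blast
    then show ?thesis using verts_mono[of X B ends] unfolding tight_def by blast
  qed
  then show "verts ends E \<subseteq> verts ends B" by (auto simp: verts_def)
qed

text \<open>The heart of the argument: the part \<open>R\<close> of a circuit lying in \<open>B\<close> but outside
\<open>U\<close> would raise \<open>\<Delta>U\<close> by at least as much as it raises \<open>\<Delta>\<close> of the rest of the circuit,
i.e. by at least one.\<close>

lemma tight_absorbs_Mk_circuit:
  assumes g: "graph E ends" and k: "1 \<le> k" and I: "Mk_indep ends E k B"
    and U: "tight ends k B U"
    and cover: "\<And>e. e \<in> E \<Longrightarrow> e \<notin> B \<Longrightarrow> ends e \<subseteq> verts ends U"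
    and C: "Mk_circuit ends E k C"
  shows "C \<inter> B \<subseteq> U"
proof (rule ccontr)
  assume "\<not> C \<inter> B \<subseteq> U"
  define R where "R = C \<inter> B - U"
  define S where "S = C - R"
  have "R \<noteq> {}" using \<open>\<not> C \<inter> B \<subseteq> U\<close> unfolding R_def by blast
  note BE = Mk_indepD(1)[OF g k I] and bound = Mk_indepD(2)[OF g k I]
  have CE: "C \<subseteq> E" and dC: "delta ends C = int k" using Mk_circuit_delta[OF C] by auto
  have UB: "U \<subseteq> B" "U \<noteq> {}" and dU: "delta ends U = int k - 1" using U unfolding tight_def by auto
  have "S \<subset> C" using \<open>R \<noteq> {}\<close> unfolding S_def R_def by blast
  then have dS: "delta ends S \<le> int k - 1" by (rule Mk_circuit_psubset_delta[OF g k C])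
  have "ends s \<subseteq> verts ends U" if "s \<in> S" for s
  proof (cases "s \<in> B")
    case True
    then have "s \<in> U" using that unfolding S_def R_def by blast
    then show ?thesis by (auto simp: verts_def)
  next
    case False
    then show ?thesis using cover that CE unfolding S_def by blast
  qed
  then have "verts ends S \<subseteq> verts ends U" by (auto simp: verts_def)
  then have "delta ends (S \<union> R) - delta ends S \<le> delta ends (U \<union> R) - delta ends U"
    using CE UB BE by (intro delta_gain_mono[OF g]) (auto simp: S_def R_def)
  moreover have "S \<union> R = C" unfolding S_def R_def by blast
  ultimately have "int k \<le> delta ends (U \<union> R)" using dC dS dU by simp
  moreover have "delta ends (U \<union> R) \<le> int k - 1"
    using bound[of "U \<union> R"] UB unfolding R_def by blast
  ultimately show False by linarith
qed

lemma Mk_base_delta: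
  assumes g: "graph E ends" and k: "1 \<le> k" and B: "Mk_base ends E k B"
    and "E \<noteq> {}" and circuits: "\<And>f. f \<in> E \<Longrightarrow> \<exists>C. Mk_circuit ends E k C \<and> f \<in> C"
  shows "delta ends B = int k - 1"
proof -
  have I: "Mk_indep ends E k B" using B unfolding Mk_base_def by blast
  note BE = Mk_indepD(1)[OF g k I] and bound = Mk_indepD(2)[OF g k I]
  obtain C0 where C0: "Mk_circuit ends E k C0" using circuits \<open>E \<noteq> {}\<close> by blast
  have C0E: "C0 \<subseteq> E" "C0 \<noteq> {}" and dC0: "delta ends C0 = int k"
    using Mk_circuit_delta[OF C0] by auto
  have "\<not> C0 \<subseteq> B"
  proof
    assume "C0 \<subseteq> B"
    then have "delta ends C0 \<le> int k - 1" using bound C0E(2) by blast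
    then show False using dC0 by linarith
  qed
  then obtain e1 where e1: "e1 \<in> E" "e1 \<notin> B" using C0E by blast
  define T where "T = {X. tight ends k B X}"
  have U: "tight ends k B (\<Union>T)"
    using Mk_base_nonbase_edge_covered[OF g k B e1] tight_Union_all[OF g k I] unfolding T_def by blast
  have "ends e \<subseteq> verts ends (\<Union>T)" if e: "e \<in> E" "e \<notin> B" for e
  proof -
    obtain X where "tight ends k B X" "ends e \<subseteq> verts ends X"
      using Mk_base_nonbase_edge_covered[OF g k B e] by blast
    then show ?thesis using verts_mono[of X "\<Union>T" ends] unfolding T_def by blast
  qed
  then have "C \<inter> B \<subseteq> \<Union>T" if "Mk_circuit ends E k C" for C
    using tight_absorbs_Mk_circuit[OF g k I U _ that] by blast
  then have "B \<subseteq> \<Union>T" using circuits BE by blast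
  moreover have "\<Union>T \<subseteq> B" using U unfolding tight_def by blast
  ultimately have "B = \<Union>T" by (rule equalityI)
  then show ?thesis using U unfolding tight_def by simp
qed

subsection \<open>Components\<close>

lemma edge_adj_reachable_in_separated:
  assumes "verts ends W \<inter> verts ends (B - W) = {}" "e \<in> W" "(edge_adj ends B)\<^sup>*\<^sup>* e f"
  shows "f \<in> W"
  using assms(3)
proof (induction rule: rtranclp_induct)
  case base
  then show ?case using \<open>e \<in> W\<close> .
next
  case (step y z)
  then obtain v where "z \<in> B" "v \<in> ends y" "v \<in> ends z" unfolding edge_adj_def by blast
  show ?case
  proof (rule ccontr)
    assume "z \<notin> W"
    then have "v \<in> verts ends (B - W)" using \<open>z \<in> B\<close> \<open>v \<in> ends z\<close> unfolding verts_def by blast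
    moreover have "v \<in> verts ends W" using step.IH \<open>v \<in> ends y\<close> unfolding verts_def by blast
    ultimately show False using assms(1) by blast
  qed
qed

lemma comp_edge_setsI: "e \<in> B \<Longrightarrow> {f. (edge_adj ends B)\<^sup>*\<^sup>* e f} \<in> comp_edge_sets ends B"
  unfolding comp_edge_sets_def by auto

lemma comp_edge_sets_subset:
  assumes "Y \<in> comp_edge_sets ends B"
  shows "Y \<subseteq> B"
proof
  obtain e where "e \<in> B" and Y: "Y = {f. (edge_adj ends B)\<^sup>*\<^sup>* e f}"
    using assms unfolding comp_edge_sets_def by blast
  have "verts ends B \<inter> verts ends (B - B) = {}" by (simp add: verts_def)
  then show "f \<in> B" if "f \<in> Y" for f
    using edge_adj_reachable_in_separated \<open>e \<in> B\<close> that unfolding Y by fastforce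
qed

lemma comp_edge_sets_separated:
  assumes "Y \<in> comp_edge_sets ends B"
  shows "verts ends Y \<inter> verts ends (B - Y) = {}"
proof (rule ccontr)
  assume "verts ends Y \<inter> verts ends (B - Y) \<noteq> {}"
  then obtain y h v where y: "y \<in> Y" "v \<in> ends y" and h: "h \<in> B" "h \<notin> Y" "v \<in> ends h"
    unfolding verts_def by blast
  obtain e where Y: "Y = {f. (edge_adj ends B)\<^sup>*\<^sup>* e f}"
    using assms unfolding comp_edge_sets_def by blast
  have "edge_adj ends B y h"
    using y h comp_edge_sets_subset[OF assms] unfolding edge_adj_def by blast
  moreover have "(edge_adj ends B)\<^sup>*\<^sup>* e y" using y unfolding Y by simp
  ultimately have "h \<in> Y" unfolding Y by (simp add: rtranclp.rtrancl_into_rtrancl)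
  then show False using h by blast
qed

lemma delta_comp_edge_sets_split:
  assumes g: "graph E ends" and "B \<subseteq> E" "Y \<in> comp_edge_sets ends B"
  shows "delta ends B = delta ends Y + delta ends (B - Y)"
proof -
  have "Y \<subseteq> B" using comp_edge_sets_subset[OF assms(3)] .
  then have "delta ends (Y \<union> (B - Y)) = delta ends Y + delta ends (B - Y)"
    using assms(2) comp_edge_sets_separated[OF assms(3)] by (intro delta_Un_separated[OF g]) auto
  then show ?thesis using \<open>Y \<subseteq> B\<close> by (simp add: Un_absorb1)
qed

lemma Mk_indep_comp_delta_nonneg:
  assumes g: "graph E ends" and k: "1 \<le> k" and I: "Mk_indep ends E k B"
    and dB: "delta ends B = int k - 1" and Y: "Y \<in> comp_edge_sets ends B"
  shows "0 \<le> delta ends Y"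
proof -
  have "delta ends (B - Y) \<le> int k - 1"
  proof (cases "B - Y = {}")
    case True
    then show ?thesis using k by (simp add: True)
  next
    case False
    then show ?thesis using Mk_indepD(2)[OF g k I, of "B - Y"] by blast
  qed
  then show ?thesis using delta_comp_edge_sets_split[OF g Mk_indepD(1)[OF g k I] Y] dB by linarith
qed

text \<open>Growing \<open>X\<close> inside \<open>B\<close> never decreases \<open>\<Delta>\<close>: either some edge of \<open>B - X\<close> meets
\<open>X\<close>, or \<open>X\<close> is a union of components and a whole further component can be added.\<close>

lemma delta_le_if_comp_delta_nonneg:
  assumes g: "graph E ends" and BE: "B \<subseteq> E"
    and comps: "\<And>Y. Y \<in> comp_edge_sets ends B \<Longrightarrow> 0 \<le> delta ends Y"
    and "X \<subseteq> B"
  shows "delta ends X \<le> delta ends B"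
  using \<open>X \<subseteq> B\<close>
proof (induction "card (B - X)" arbitrary: X rule: less_induct)
  case less
  have finB: "finite B" using graph_finite_edges[OF g BE] .
  have XE: "X \<subseteq> E" using less.prems BE by blast
  show ?case
  proof (cases "X = B")
    case True
    then show ?thesis by simp
  next
    case False
    then obtain e0 where e0: "e0 \<in> B" "e0 \<notin> X" using less.prems by blast
    show ?thesis
    proof (cases "verts ends X \<inter> verts ends (B - X) = {}")
      case False
      then obtain v e where "v \<in> verts ends X" "e \<in> B - X" "v \<in> ends e"
        unfolding verts_def by blast
      then have e: "e \<in> B" "e \<notin> X" "ends e \<inter> verts ends X \<noteq> {}" by blast+
      have "delta ends X \<le> delta ends (insert e X)"
        using e BE by (intro delta_insert_adjacent[OF g XE]) auto
      also have "\<dots> \<le> delta ends B"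
      proof (rule less.hyps)
        have "B - insert e X \<subset> B - X" using e by blast
        then show "card (B - insert e X) < card (B - X)" using finB by (simp add: psubset_card_mono)
        show "insert e X \<subseteq> B" using e less.prems by blast
      qed
      finally show ?thesis .
    next
      case True
      define Y where "Y = {f. (edge_adj ends B)\<^sup>*\<^sup>* e0 f}"
      have Y: "Y \<in> comp_edge_sets ends B" unfolding Y_def by (rule comp_edge_setsI[OF e0(1)])
      have "B - (B - X) = X" using less.prems by blast
      have sep: "verts ends (B - X) \<inter> verts ends (B - (B - X)) = {}"
        unfolding \<open>B - (B - X) = X\<close> using True by blast
      have YBX: "Y \<subseteq> B - X"
      proof
        fix f assume "f \<in> Y"
        then show "f \<in> B - X"
          using edge_adj_reachable_in_separated[OF sep, of e0 f] e0 unfolding Y_def by simp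
      qed
      have "delta ends (X \<union> Y) = delta ends X + delta ends Y"
      proof (rule delta_Un_separated[OF g XE])
        show "Y \<subseteq> E" "X \<inter> Y = {}" using YBX BE by auto
        show "verts ends X \<inter> verts ends Y = {}" using True verts_mono[OF YBX, of ends] by blast
      qed
      moreover have "delta ends (X \<union> Y) \<le> delta ends B"
      proof (rule less.hyps)
        have "e0 \<in> Y" unfolding Y_def by simp
        then have "B - (X \<union> Y) \<subset> B - X" using e0 by blast
        then show "card (B - (X \<union> Y)) < card (B - X)" using finB by (simp add: psubset_card_mono)
        show "X \<union> Y \<subseteq> B" using YBX less.prems by blast
      qed
      ultimately show ?thesis using comps[OF Y] by linarith
    qed
  qed
qed

lemma Mk_base_if_spanning:
  assumes g: "graph E ends" and k: "1 \<le> k" and BE: "B \<subseteq> E"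
    and dB: "delta ends B = int k - 1" and VB: "verts ends B = verts ends E"
    and comps: "\<And>Y. Y \<in> comp_edge_sets ends B \<Longrightarrow> 0 \<le> delta ends Y"
  shows "Mk_base ends E k B"
proof -
  have "delta ends C \<le> int k - 1" if "C \<subseteq> B" for C
    using delta_le_if_comp_delta_nonneg[OF g BE comps that] dB by simp
  then have indep: "Mk_indep ends E k B" unfolding Mk_indep_iff[OF g k] using BE by blast
  have "I = B" if I: "Mk_indep ends E k I" and "B \<subseteq> I" for I
  proof (rule ccontr)
    assume "I \<noteq> B"
    then obtain e where e: "e \<in> I" "e \<notin> B" using \<open>B \<subseteq> I\<close> by blast
    have eE: "e \<in> E" using e Mk_indepD(1)[OF g k I] by blast
    then have "ends e \<subseteq> verts ends B" unfolding VB by (auto simp: verts_def)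
    then have "delta ends (insert e B) = int k" using delta_insert_covered[OF g BE eE e(2)] dB by simp
    moreover have "delta ends (insert e B) \<le> int k - 1"
      using Mk_indepD(2)[OF g k I, of "insert e B"] e \<open>B \<subseteq> I\<close> by blast
    ultimately show False by linarith
  qed
  then show ?thesis using indep unfolding Mk_base_def by blast
qed

theorem mainTheorem16:
  fixes E :: "'e set" and ends :: "'e \<Rightarrow> 'v set" and k :: nat and B :: "'e set"
  assumes "graph E ends"
    and "1 \<le> k"
    and "Mk_connected ends E k"
    and "B \<subseteq> E"
  shows "Mk_base ends E k B \<longleftrightarrow>
           delta ends B = int k - 1 \<and>
           verts ends B = verts ends E \<and>
           (\<forall>Y\<in>comp_edge_sets ends B. delta ends Y \<ge> 0)"
proof
  assume B: "Mk_base ends E k B"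
  have "E \<noteq> {}" and circuits: "\<And>f. f \<in> E \<Longrightarrow> \<exists>C. Mk_circuit ends E k C \<and> f \<in> C"
    using assms(3) unfolding Mk_connected_def by auto
  have dB: "delta ends B = int k - 1" by (rule Mk_base_delta[OF assms(1,2) B \<open>E \<noteq> {}\<close> circuits])
  have I: "Mk_indep ends E k B" using B unfolding Mk_base_def by blast
  show "delta ends B = int k - 1 \<and> verts ends B = verts ends E \<and>
           (\<forall>Y\<in>comp_edge_sets ends B. delta ends Y \<ge> 0)"
    using dB Mk_base_verts[OF assms(1,2) B] Mk_indep_comp_delta_nonneg[OF assms(1,2) I dB] by simp
next
  assume "delta ends B = int k - 1 \<and> verts ends B = verts ends E \<and>
           (\<forall>Y\<in>comp_edge_sets ends B. delta ends Y \<ge> 0)"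
  then show "Mk_base ends E k B" using Mk_base_if_spanning[OF assms(1,2,4)] by simp
qed

end
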